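(* Let $2\le g<h$. Then for every self-adjoint tuple $X\in SM_n(\mathbb C)^g$, $X\in\mathcal D_{F^{[g]}}$ if and only if $(X,0)\in\mathcal D_{F^{[h]}}$ (with $0$ the zero tuple of length $h-g$). Moreover $\mathcal P_g\mathcal D_{F^{[h]}}=\mathcal D_{F^{[g]}}$.
   Context: $F^{[g]}$ is defined recursively: $F^{[2]}=(\sigma_z,\sigma_x)$ with $\sigma_z=\begin{bmatrix}1&0\\0&-1\end{bmatrix}$, $\sigma_x=\begin{bmatrix}0&1\\1&0\end{bmatrix}$, and if $F^{[g]}=(F_1,\dots,F_g)$ then $F^{[g+1]}=(F_1\otimes\sigma_z,\dots,F_g\otimes\sigma_z,I\otimes\sigma_x)$. For a self-adjoint matrix tuple $A$, $\mathcal D_A=\bigcup_n\{X\in SM_n(\mathbb C)^g: I-\sum_i A_i\otimes X_i\succeq0\}$. For a set $K$ of $h$-tuples of self-adjoint matrices and $g<h$, the coordinate projection $\mathcal P_gK$ is the set of $X\in SM_n^g$ (any $n$) for which there is $Y\in SM_n^{h-g}$ with $(X,Y)\in K$. *)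

theory Defs
  imports Complex_Main "Jordan_Normal_Form.Matrix"
begin

text \<open>Kronecker product: entry ((i1,i2),(j1,j2)) is A(i1,j1) * B(i2,j2),
  with row index i = i1 * dim_row B + i2 (and similarly for columns).\<close>
definition kron :: "complex mat \<Rightarrow> complex mat \<Rightarrow> complex mat" where
  "kron A B = mat (dim_row A * dim_row B) (dim_col A * dim_col B)
     (\<lambda>(i,j). A $$ (i div dim_row B, j div dim_col B) * B $$ (i mod dim_row B, j mod dim_col B))"

definition self_adjoint :: "complex mat \<Rightarrow> bool" where
  "self_adjoint A \<longleftrightarrow> dim_row A = dim_col A \<and>
     (\<forall>i < dim_row A. \<forall>j < dim_row A. A $$ (i,j) = cnj (A $$ (j,i)))"

definition psd :: "complex mat \<Rightarrow> bool" where
  "psd A \<longleftrightarrow> self_adjoint A \<and>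
     (\<forall>v. dim_vec v = dim_row A \<longrightarrow>
        0 \<le> Re (\<Sum>i<dim_row A. \<Sum>j<dim_row A. cnj (v $ i) * A $$ (i,j) * v $ j))"

definition sigma_z :: "complex mat" where
  "sigma_z = mat_of_rows_list 2 [[1, 0], [0, -1]]"

definition sigma_x :: "complex mat" where
  "sigma_x = mat_of_rows_list 2 [[0, 1], [1, 0]]"

text \<open>F g = F^{[g]} for g \<ge> 2 (values for g < 2 are irrelevant).\<close>
fun F :: "nat \<Rightarrow> complex mat list" where
  "F 0 = []"
| "F (Suc 0) = []"
| "F (Suc (Suc 0)) = [sigma_z, sigma_x]"
| "F (Suc (Suc (Suc g))) =
     (let Fs = F (Suc (Suc g)) in
      map (\<lambda>M. kron M sigma_z) Fs @ [kron (1\<^sub>m (dim_row (hd Fs))) sigma_x])"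

definition SM_tuple :: "nat \<Rightarrow> nat \<Rightarrow> complex mat list \<Rightarrow> bool" where
  "SM_tuple n g X \<longleftrightarrow> length X = g \<and> (\<forall>M \<in> set X. M \<in> carrier_mat n n \<and> self_adjoint M)"

definition pencil :: "complex mat list \<Rightarrow> nat \<Rightarrow> complex mat list \<Rightarrow> complex mat" where
  "pencil A n X = (let d = dim_row (hd A) in
     1\<^sub>m (d * n) - foldr (+) (map2 kron A X) (0\<^sub>m (d * n) (d * n)))"

definition freeSpec :: "complex mat list \<Rightarrow> complex mat list set" where
  "freeSpec A = (\<Union>n. {X. SM_tuple n (length A) X \<and> psd (pencil A n X)})"

definition proj :: "nat \<Rightarrow> nat \<Rightarrow> complex mat list set \<Rightarrow> complex mat list set" where
  "proj g h K = {X. \<exists>n Y. SM_tuple n g X \<and> SM_tuple n (h - g) Y \<and> X @ Y \<in> K}"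

end

theory Submission
  imports Defs
begin

text \<open>
  Write \<open>L(A, X) = I - \<Sum>\<^sub>i A\<^sub>i \<otimes> X\<^sub>i\<close> and \<open>F[m]\<close> for \<open>F m\<close>. Since
  \<open>F[m+1] = (F[m] \<otimes> sigma_z, I \<otimes> sigma_x)\<close>, grouping the rows of \<open>L(F[m+1], (X, Y))\<close> by the
  index of the Pauli factor turns it into the block matrix
  \<open>[[L(F[m], X), -I \<otimes> Y], [-I \<otimes> Y, I + \<Sum>\<^sub>i F[m]\<^sub>i \<otimes> X\<^sub>i]]\<close>. Its upper left block shows that
  \<open>(X, Y) \<in> freeSpec (F[m+1])\<close> forces \<open>X \<in> freeSpec (F[m])\<close>. For \<open>Y = 0\<close> the matrix is block
  diagonal, and its lower block is congruent to \<open>L(F[m], X)\<close>: there is a signed permutation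
  matrix \<open>U\<close> with \<open>U F[m]\<^sub>i U\<^sup>T = -F[m]\<^sub>i\<close> for all \<open>i\<close> (it exists for \<open>F[2]\<close> and lifts from
  \<open>F[m]\<close> to \<open>F[m+1]\<close>). Hence \<open>X \<in> freeSpec (F[m])\<close> iff \<open>(X, 0) \<in> freeSpec (F[m+1])\<close>, and
  induction on \<open>h - g\<close> gives both claims. Positivity is checked on the Hermitian form
  \<open>\<Sum>\<^sub>i\<^sub>j cnj (f i) * K i j * f j\<close> of the entry function \<open>K\<close> of a matrix.
\<close>

lemma dim_kron [simp]:
  "dim_row (kron A B) = dim_row A * dim_row B"
  "dim_col (kron A B) = dim_col A * dim_col B"
  by (simp_all add: kron_def)

lemma index_kron:
  "i < dim_row A * dim_row B \<Longrightarrow> j < dim_col A * dim_col B \<Longrightarrow>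
   kron A B $$ (i, j) =
     A $$ (i div dim_row B, j div dim_col B) * B $$ (i mod dim_row B, j mod dim_col B)"
  by (simp add: kron_def)

lemma kron_carrier_mat:
  "A \<in> carrier_mat a a' \<Longrightarrow> B \<in> carrier_mat b b' \<Longrightarrow> kron A B \<in> carrier_mat (a * b) (a' * b')"
  by (intro carrier_matI) auto

lemma index_kron_2:
  assumes "A \<in> carrier_mat d d" "B \<in> carrier_mat 2 2" "a < d" "a' < d" "s < 2" "s' < 2"
  shows "kron A B $$ (a * 2 + s, a' * 2 + s') = A $$ (a, a') * B $$ (s, s')"
proof -
  have "a * 2 + s < d * 2" "a' * 2 + s' < d * 2"
    using assms by linarith+
  then show ?thesis
    using assms by (simp add: index_kron)
qed

lemma self_adjoint_kron:
  assumes "self_adjoint A" "self_adjoint B"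
  shows "self_adjoint (kron A B)"
  unfolding self_adjoint_def
proof (intro conjI allI impI)
  show "dim_row (kron A B) = dim_col (kron A B)"
    using assms by (simp add: self_adjoint_def)
  fix i j
  assume ij: "i < dim_row (kron A B)" "j < dim_row (kron A B)"
  let ?b = "dim_row B"
  have "?b > 0"
    using ij by (cases ?b) auto
  then have bounds: "i div ?b < dim_row A" "j div ?b < dim_row A" "i mod ?b < ?b" "j mod ?b < ?b"
    using ij by (auto simp: less_mult_imp_div_less)
  have dims: "dim_col A = dim_row A" "dim_col B = ?b"
    using assms unfolding self_adjoint_def by simp_all
  have "kron A B $$ (i, j) = A $$ (i div ?b, j div ?b) * B $$ (i mod ?b, j mod ?b)"
    using ij dims by (simp add: index_kron)
  also have "\<dots> = cnj (A $$ (j div ?b, i div ?b) * B $$ (j mod ?b, i mod ?b))"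
    using assms bounds unfolding self_adjoint_def complex_cnj_mult by metis
  also have "\<dots> = cnj (kron A B $$ (j, i))"
    using ij dims by (simp add: index_kron)
  finally show "kron A B $$ (i, j) = cnj (kron A B $$ (j, i))" .
qed

lemma self_adjoint_one: "self_adjoint (1\<^sub>m d)"
  by (simp add: self_adjoint_def)

lemma self_adjoint_zero: "self_adjoint (0\<^sub>m n n)"
  by (simp add: self_adjoint_def)

lemma dim_sigma [simp]:
  "dim_row sigma_z = 2" "dim_col sigma_z = 2" "dim_row sigma_x = 2" "dim_col sigma_x = 2"
  by (simp_all add: sigma_z_def sigma_x_def mat_of_rows_list_def)

lemma sigma_carrier: "sigma_z \<in> carrier_mat 2 2" "sigma_x \<in> carrier_mat 2 2"
  by (simp_all add: carrier_matI)

lemma index_sigma_z: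
  "s < 2 \<Longrightarrow> t < 2 \<Longrightarrow> sigma_z $$ (s, t) = (if s = t then if s = 0 then 1 else -1 else 0)"
  by (cases s; cases t) (auto simp: sigma_z_def mat_of_rows_list_def less_Suc_eq)

lemma index_sigma_x:
  "s < 2 \<Longrightarrow> t < 2 \<Longrightarrow> sigma_x $$ (s, t) = (if s = t then 0 else 1)"
  by (cases s; cases t) (auto simp: sigma_x_def mat_of_rows_list_def less_Suc_eq)

lemma self_adjoint_sigma: "self_adjoint sigma_z" "self_adjoint sigma_x"
  by (auto simp: self_adjoint_def index_sigma_z index_sigma_x)

definition F_next :: "nat \<Rightarrow> complex mat list \<Rightarrow> complex mat list" where
  "F_next d A = map (\<lambda>M. kron M sigma_z) A @ [kron (1\<^sub>m d) sigma_x]"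

lemma SM_tuple_F_next:
  assumes "SM_tuple d m A"
  shows "SM_tuple (d * 2) (Suc m) (F_next d A)"
  using assms kron_carrier_mat[OF _ sigma_carrier(1)]
    kron_carrier_mat[OF one_carrier_mat sigma_carrier(2)]
  by (auto simp: SM_tuple_def F_next_def self_adjoint_kron self_adjoint_one self_adjoint_sigma)

lemma dim_row_hd_SM_tuple: "SM_tuple d m A \<Longrightarrow> 0 < m \<Longrightarrow> dim_row (hd A) = d"
  by (cases A) (auto simp: SM_tuple_def)

lemma SM_tuple_dim_unique: "SM_tuple n m X \<Longrightarrow> SM_tuple n' m X \<Longrightarrow> 0 < m \<Longrightarrow> n = n'"
  using dim_row_hd_SM_tuple by metis

lemma SM_tuple_append: "SM_tuple n g X \<Longrightarrow> SM_tuple n k Y \<Longrightarrow> SM_tuple n (g + k) (X @ Y)"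
  by (auto simp: SM_tuple_def)

lemma SM_tuple_replicate_zero: "SM_tuple n k (replicate k (0\<^sub>m n n))"
  using self_adjoint_zero by (auto simp: SM_tuple_def)

lemma F_Suc_hd: "2 \<le> m \<Longrightarrow> F (Suc m) = F_next (dim_row (hd (F m))) (F m)"
  by (cases m rule: F.cases) (auto simp: Let_def F_next_def)

lemma SM_tuple_F: "2 \<le> m \<Longrightarrow> SM_tuple (2 ^ (m - 1)) m (F m)"
proof (induction m rule: dec_induct)
  case base
  have "F 2 = [sigma_z, sigma_x]"
    by (simp add: numeral_2_eq_2)
  then show ?case
    using sigma_carrier self_adjoint_sigma by (simp add: SM_tuple_def)
next
  case (step m)
  have "2 ^ (Suc m - 1) = 2 ^ (m - 1) * (2::nat)"
    using step.hyps(1) by (cases m) auto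
  moreover have "F (Suc m) = F_next (2 ^ (m - 1)) (F m)"
    using F_Suc_hd[OF step.hyps(1)] dim_row_hd_SM_tuple[OF step.IH] step.hyps(1) by simp
  ultimately show ?case
    using SM_tuple_F_next[OF step.IH] by simp
qed

lemma F_Suc: "2 \<le> m \<Longrightarrow> F (Suc m) = F_next (2 ^ (m - 1)) (F m)"
  using F_Suc_hd dim_row_hd_SM_tuple[OF SM_tuple_F] by simp

lemma F_carrier_length:
  assumes "2 \<le> m" "SM_tuple n m X"
  shows "\<forall>M\<in>set (F m). M \<in> carrier_mat (2 ^ (m - 1)) (2 ^ (m - 1))" "length X = length (F m)"
  using SM_tuple_F[OF assms(1)] assms(2) by (simp_all add: SM_tuple_def)

section \<open>Hermitian forms\<close>

definition qform :: "nat \<Rightarrow> (nat \<Rightarrow> nat \<Rightarrow> complex) \<Rightarrow> (nat \<Rightarrow> complex) \<Rightarrow> complex" where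
  "qform N K f = (\<Sum>i<N. \<Sum>j<N. cnj (f i) * K i j * f j)"

definition form_nonneg :: "nat \<Rightarrow> (nat \<Rightarrow> nat \<Rightarrow> complex) \<Rightarrow> bool" where
  "form_nonneg N K \<longleftrightarrow> (\<forall>f. 0 \<le> Re (qform N K f))"

lemma form_nonneg_0 [simp]: "form_nonneg 0 K"
  by (simp add: form_nonneg_def qform_def)

lemma form_nonneg_cong:
  assumes "\<And>i j. i < N \<Longrightarrow> j < N \<Longrightarrow> K i j = K' i j"
  shows "form_nonneg N K \<longleftrightarrow> form_nonneg N K'"
proof -
  have "qform N K f = qform N K' f" for f
    unfolding qform_def using assms by (intro sum.cong) auto
  then show ?thesis
    by (simp add: form_nonneg_def)
qed

lemma psd_iff_form_nonneg:
  "psd M \<longleftrightarrow> self_adjoint M \<and> form_nonneg (dim_row M) (\<lambda>i j. M $$ (i, j))"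
proof -
  let ?N = "dim_row M" and ?K = "\<lambda>i j. M $$ (i, j)"
  have "qform ?N ?K (\<lambda>i. v $ i) = (\<Sum>i<?N. \<Sum>j<?N. cnj (v $ i) * M $$ (i, j) * v $ j)" for v
    by (simp add: qform_def)
  moreover have "qform ?N ?K f = qform ?N ?K (\<lambda>i. vec ?N f $ i)" for f
    unfolding qform_def by (intro sum.cong) auto
  ultimately have "(\<forall>v. dim_vec v = ?N \<longrightarrow>
        0 \<le> Re (\<Sum>i<?N. \<Sum>j<?N. cnj (v $ i) * M $$ (i, j) * v $ j)) \<longleftrightarrow> form_nonneg ?N ?K"
    unfolding form_nonneg_def by (metis dim_vec)
  then show ?thesis
    unfolding psd_def by blast
qed

lemma qform_reindex:
  assumes "bij_betw \<tau> {..<N} {..<N}"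
  shows "qform N K f = qform N (\<lambda>i j. K (\<tau> i) (\<tau> j)) (f \<circ> \<tau>)"
proof -
  let ?G = "\<lambda>i j. cnj (f i) * K i j * f j"
  have "qform N K f = (\<Sum>i<N. \<Sum>j<N. ?G i (\<tau> j))"
    unfolding qform_def by (intro sum.cong refl sum.reindex_bij_betw[OF assms, symmetric])
  also have "\<dots> = (\<Sum>i<N. \<Sum>j<N. ?G (\<tau> i) (\<tau> j))"
    by (rule sum.reindex_bij_betw[OF assms, symmetric])
  finally show ?thesis
    by (simp add: qform_def)
qed

lemma form_nonneg_congruence:
  fixes \<rho> :: "nat \<Rightarrow> real" and K K' :: "nat \<Rightarrow> nat \<Rightarrow> complex"
  assumes "bij_betw \<tau> {..<N} {..<N}"
    and "\<And>i j. i < N \<Longrightarrow> j < N \<Longrightarrow> K' (\<tau> i) (\<tau> j) = of_real (\<rho> i * \<rho> j) * K i j"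
    and "form_nonneg N K"
  shows "form_nonneg N K'"
  unfolding form_nonneg_def
proof
  fix f
  have "qform N K' f = qform N (\<lambda>i j. K' (\<tau> i) (\<tau> j)) (f \<circ> \<tau>)"
    by (rule qform_reindex[OF assms(1)])
  also have "\<dots> = qform N K (\<lambda>i. \<rho> i * f (\<tau> i))"
    unfolding qform_def using assms(2) by (intro sum.cong) (auto simp: algebra_simps)
  finally show "0 \<le> Re (qform N K' f)"
    using assms(3) by (simp add: form_nonneg_def)
qed

definition kron_sum_entry ::
    "complex mat list \<Rightarrow> complex mat list \<Rightarrow> nat \<Rightarrow> nat \<Rightarrow> nat \<Rightarrow> complex" where
  "kron_sum_entry A X n R R' =
     (\<Sum>i<length A. A ! i $$ (R div n, R' div n) * X ! i $$ (R mod n, R' mod n))"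

definition pencil_kernel ::
    "complex mat list \<Rightarrow> complex mat list \<Rightarrow> nat \<Rightarrow> nat \<Rightarrow> nat \<Rightarrow> complex" where
  "pencil_kernel A X n R R' = of_bool (R = R') - kron_sum_entry A X n R R'"

lemma kron_sum_carrier_index:
  assumes "length A = length X" "\<forall>M\<in>set A. M \<in> carrier_mat d d" "\<forall>M\<in>set X. M \<in> carrier_mat n n"
  shows "foldr (+) (map2 kron A X) (0\<^sub>m (d * n) (d * n)) \<in> carrier_mat (d * n) (d * n) \<and>
    (\<forall>R < d * n. \<forall>R' < d * n.
      foldr (+) (map2 kron A X) (0\<^sub>m (d * n) (d * n)) $$ (R, R') = kron_sum_entry A X n R R')"
  using assms
proof (induction A X rule: list_induct2)
  case Nil
  then show ?case
    by (auto simp: kron_sum_entry_def)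
next
  case (Cons a A x X)
  let ?T = "foldr (+) (map2 kron A X) (0\<^sub>m (d * n) (d * n))"
  have T: "?T \<in> carrier_mat (d * n) (d * n)"
    "\<And>R R'. R < d * n \<Longrightarrow> R' < d * n \<Longrightarrow> ?T $$ (R, R') = kron_sum_entry A X n R R'"
    using Cons by auto
  have ax: "a \<in> carrier_mat d d" "x \<in> carrier_mat n n"
    using Cons.prems by auto
  have "(kron a x + ?T) $$ (R, R') = kron_sum_entry (a # A) (x # X) n R R'"
    if "R < d * n" "R' < d * n" for R R'
    using that T ax
    by (simp add: index_kron kron_sum_entry_def sum.lessThan_Suc_shift del: sum.lessThan_Suc)
  then show ?case
    using T(1) ax by (simp add: kron_carrier_mat)
qed

lemma pencil_carrier_index:
  assumes "SM_tuple d m A" "SM_tuple n m X" "0 < m"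
  shows "pencil A n X \<in> carrier_mat (d * n) (d * n)"
    and "R < d * n \<Longrightarrow> R' < d * n \<Longrightarrow> pencil A n X $$ (R, R') = pencil_kernel A X n R R'"
proof -
  have "length A = length X" "\<forall>M\<in>set A. M \<in> carrier_mat d d" "\<forall>M\<in>set X. M \<in> carrier_mat n n"
    using assms(1,2) by (auto simp: SM_tuple_def)
  note sum = kron_sum_carrier_index[OF this]
  have "pencil A n X = 1\<^sub>m (d * n) - foldr (+) (map2 kron A X) (0\<^sub>m (d * n) (d * n))"
    by (simp add: pencil_def dim_row_hd_SM_tuple[OF assms(1,3)])
  then show "pencil A n X \<in> carrier_mat (d * n) (d * n)"
    and "R < d * n \<Longrightarrow> R' < d * n \<Longrightarrow> pencil A n X $$ (R, R') = pencil_kernel A X n R R'"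
    using sum by (auto simp: pencil_kernel_def)
qed

lemma kron_sum_entry_adjoint:
  assumes "SM_tuple d m A" "SM_tuple n m X" "R < d * n" "R' < d * n"
  shows "kron_sum_entry A X n R R' = cnj (kron_sum_entry A X n R' R)"
  unfolding kron_sum_entry_def cnj_sum
proof (intro sum.cong refl)
  fix i
  assume "i \<in> {..<length A}"
  then have "A ! i \<in> set A" "X ! i \<in> set X"
    using assms(1,2) by (auto simp: SM_tuple_def)
  then have sa: "self_adjoint (A ! i)" "self_adjoint (X ! i)"
    and dims: "dim_row (A ! i) = d" "dim_row (X ! i) = n"
    using assms(1,2) by (auto simp: SM_tuple_def)
  have "0 < n"
    using assms(3) by (cases n) auto
  then have "R div n < d" "R' div n < d" "R mod n < n" "R' mod n < n"
    using assms(3,4) by (auto simp: less_mult_imp_div_less)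
  then have "A ! i $$ (R div n, R' div n) = cnj (A ! i $$ (R' div n, R div n))"
    "X ! i $$ (R mod n, R' mod n) = cnj (X ! i $$ (R' mod n, R mod n))"
    using sa dims unfolding self_adjoint_def by blast+
  then show "A ! i $$ (R div n, R' div n) * X ! i $$ (R mod n, R' mod n) =
      cnj (A ! i $$ (R' div n, R div n) * X ! i $$ (R' mod n, R mod n))"
    by simp
qed

lemma psd_pencil_iff:
  assumes "SM_tuple d m A" "SM_tuple n m X" "0 < m"
  shows "psd (pencil A n X) \<longleftrightarrow> form_nonneg (d * n) (pencil_kernel A X n)"
proof -
  note P = pencil_carrier_index[OF assms]
  have "self_adjoint (pencil A n X)"
    unfolding self_adjoint_def
  proof (intro conjI allI impI)
    show "dim_row (pencil A n X) = dim_col (pencil A n X)"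
      using P(1) by simp
    fix R R'
    assume "R < dim_row (pencil A n X)" "R' < dim_row (pencil A n X)"
    then have RR: "R < d * n" "R' < d * n"
      using P(1) by auto
    show "pencil A n X $$ (R, R') = cnj (pencil A n X $$ (R', R))"
      unfolding P(2)[OF RR] P(2)[OF RR(2,1)] pencil_kernel_def
      by (subst kron_sum_entry_adjoint[OF assms(1,2) RR]) auto
  qed
  moreover have "dim_row (pencil A n X) = d * n"
    using P(1) by simp
  moreover have "form_nonneg (d * n) (\<lambda>i j. pencil A n X $$ (i, j))
      \<longleftrightarrow> form_nonneg (d * n) (pencil_kernel A X n)"
    by (rule form_nonneg_cong) (rule P(2))
  ultimately show ?thesis
    by (simp add: psd_iff_form_nonneg)
qed

lemma psd_pencil_F_iff:
  assumes "2 \<le> m" "SM_tuple n m X"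
  shows "psd (pencil (F m) n X) \<longleftrightarrow> form_nonneg (2 ^ (m - 1) * n) (pencil_kernel (F m) X n)"
  using psd_pencil_iff[OF SM_tuple_F[OF assms(1)] assms(2)] assms(1) by simp

section \<open>Block indices\<close>

lemma block_index_less: "(q::nat) < d \<Longrightarrow> r < n \<Longrightarrow> q * n + r < d * n"
  using mult_le_mono1[of "Suc q" d n] by simp

lemma bij_betw_lessThan_if_inj_card:
  assumes "inj_on f A" "f ` A \<subseteq> {..<N}" "card A = N"
  shows "bij_betw f A {..<N}"
  using assms card_image[OF assms(1)] card_subset_eq[OF finite_lessThan assms(2)]
  by (simp add: bij_betw_def)

lemma bij_betw_block_perm:
  fixes \<pi> :: "nat \<Rightarrow> nat"
  assumes \<pi>: "bij_betw \<pi> {..<d} {..<d}" and n: "0 < n"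
  shows "bij_betw (\<lambda>R. \<pi> (R div n) * n + R mod n) {..<d * n} {..<d * n}"
proof (rule bij_betw_lessThan_if_inj_card)
  have div_mod: "(\<pi> (R div n) * n + R mod n) div n = \<pi> (R div n)"
    "(\<pi> (R div n) * n + R mod n) mod n = R mod n" for R
    using n by simp_all
  have div_less: "R div n < d" if "R < d * n" for R
    using that by (simp add: less_mult_imp_div_less)
  show "inj_on (\<lambda>R. \<pi> (R div n) * n + R mod n) {..<d * n}"
  proof (rule inj_onI)
    fix R R'
    assume R: "R \<in> {..<d * n}" "R' \<in> {..<d * n}"
      and eq: "\<pi> (R div n) * n + R mod n = \<pi> (R' div n) * n + R' mod n"
    have "\<pi> (R div n) = \<pi> (R' div n)"
      using arg_cong[OF eq, of "\<lambda>x. x div n"] by (simp only: div_mod)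
    then have "R div n = R' div n"
      using \<pi> R div_less by (auto simp: bij_betw_def dest: inj_onD)
    moreover have "R mod n = R' mod n"
      using arg_cong[OF eq, of "\<lambda>x. x mod n"] by (simp only: div_mod)
    ultimately show "R = R'"
      by (metis div_mult_mod_eq)
  qed
  show "(\<lambda>R. \<pi> (R div n) * n + R mod n) ` {..<d * n} \<subseteq> {..<d * n}"
    using \<pi> n div_less by (auto simp: bij_betw_def intro!: block_index_less)
qed simp

text \<open>In \<open>kron (kron M sigma) X\<close> with \<open>X\<close> of size \<open>n\<close>, the row for \<open>((a, s), r)\<close> is
  \<open>interleave n (a * n + r) s\<close>.\<close>

definition interleave :: "nat \<Rightarrow> nat \<Rightarrow> nat \<Rightarrow> nat" where
  "interleave n R s = (R div n * 2 + s) * n + R mod n"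

lemma interleave_div_mod:
  assumes "0 < n"
  shows "interleave n R s div n = R div n * 2 + s" "interleave n R s mod n = R mod n"
  using assms by (simp_all add: interleave_def)

lemma interleave_eq_iff:
  assumes "0 < n" "s < 2" "t < 2"
  shows "interleave n R s = interleave n R' t \<longleftrightarrow> R = R' \<and> s = t"
proof
  assume "interleave n R s = interleave n R' t"
  then have eq: "R div n * 2 + s = R' div n * 2 + t" and "R mod n = R' mod n"
    using interleave_div_mod[OF assms(1)] by metis+
  moreover from eq have "s = t"
    using assms(2,3) by (metis mod_mult_self3 mod_less mult.commute)
  moreover from eq this have "R div n = R' div n"
    by simp
  ultimately show "R = R' \<and> s = t"
    by (metis div_mult_mod_eq)
qed simp

lemma bij_betw_interleave:
  assumes "0 < n"
  shows "bij_betw (\<lambda>(R, s). interleave n R s) ({..<d * n} \<times> {..<2}) {..<d * 2 * n}"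
proof (rule bij_betw_lessThan_if_inj_card)
  show "inj_on (\<lambda>(R, s). interleave n R s) ({..<d * n} \<times> {..<2})"
    using interleave_eq_iff[OF assms] by (auto simp: inj_on_def)
  have "interleave n R s < d * 2 * n" if "R < d * n" "s < 2" for R s
  proof -
    have "R div n < d"
      using that(1) by (simp add: less_mult_imp_div_less)
    then show ?thesis
      unfolding interleave_def using that(2) assms by (intro block_index_less) auto
  qed
  then show "(\<lambda>(R, s). interleave n R s) ` ({..<d * n} \<times> {..<2}) \<subseteq> {..<d * 2 * n}"
    by auto
qed (simp add: card_cartesian_product)

lemma sum_interleave:
  assumes "0 < n"
  shows "(\<Sum>i<d * 2 * n. g i) = (\<Sum>s<2. \<Sum>R<d * n. g (interleave n R s))"
proof -
  have "(\<Sum>i<d * 2 * n. g i) = (\<Sum>(R, s)\<in>{..<d * n} \<times> {..<2}. g (interleave n R s))"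
    using sum.reindex_bij_betw[OF bij_betw_interleave[OF assms], of g] by (simp add: case_prod_beta)
  also have "\<dots> = (\<Sum>s<2. \<Sum>R<d * n. g (interleave n R s))"
    by (simp add: sum.cartesian_product[symmetric] sum.swap[of _ "{..<2}"])
  finally show ?thesis .
qed

lemma qform_interleave:
  fixes f :: "nat \<Rightarrow> complex"
  assumes "0 < n"
  shows "qform (d * 2 * n) K f = (\<Sum>s<2. \<Sum>t<2. \<Sum>R<d * n. \<Sum>R'<d * n.
    cnj (f (interleave n R s)) * K (interleave n R s) (interleave n R' t) * f (interleave n R' t))"
  unfolding qform_def sum_interleave[OF assms] by (rule sum.cong[OF refl], rule sum.swap)

lemma form_nonneg_interleave_compress:
  assumes n: "0 < n" and K: "form_nonneg (d * 2 * n) K"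
  shows "form_nonneg (d * n) (\<lambda>R R'. K (interleave n R 0) (interleave n R' 0))"
  unfolding form_nonneg_def
proof
  fix f0 :: "nat \<Rightarrow> complex"
  define f :: "nat \<Rightarrow> complex"
    where "f i = (if even (i div n) then f0 (i div n div 2 * n + i mod n) else 0)" for i
  have "f (interleave n R 0) = f0 R" "f (interleave n R 1) = 0" for R
    using n by (simp_all add: f_def interleave_div_mod)
  then have "qform (d * 2 * n) K f =
      qform (d * n) (\<lambda>R R'. K (interleave n R 0) (interleave n R' 0)) f0"
    unfolding qform_interleave[OF n] by (simp add: numeral_2_eq_2 qform_def)
  then show "0 \<le> Re (qform (d * n) (\<lambda>R R'. K (interleave n R 0) (interleave n R' 0)) f0)"
    using K by (metis form_nonneg_def)
qed

lemma form_nonneg_interleave_block_diag: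
  assumes n: "0 < n"
    and off_diag: "\<And>R R' s t. R < d * n \<Longrightarrow> R' < d * n \<Longrightarrow> s < 2 \<Longrightarrow> t < 2 \<Longrightarrow> s \<noteq> t \<Longrightarrow>
      K (interleave n R s) (interleave n R' t) = 0"
    and diag: "\<And>s. s < 2 \<Longrightarrow>
      form_nonneg (d * n) (\<lambda>R R'. K (interleave n R s) (interleave n R' s))"
  shows "form_nonneg (d * 2 * n) K"
  unfolding form_nonneg_def
proof
  fix f
  define B where "B s t = (\<Sum>R<d * n. \<Sum>R'<d * n. cnj (f (interleave n R s)) *
    K (interleave n R s) (interleave n R' t) * f (interleave n R' t))" for s t
  have "B 0 1 = 0" "B 1 0 = 0"
    unfolding B_def using off_diag by (auto intro!: sum.neutral)
  moreover have "qform (d * 2 * n) K f = (\<Sum>s<2. \<Sum>t<2. B s t)"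
    by (simp only: qform_interleave[OF n] B_def)
  ultimately have "qform (d * 2 * n) K f = B 0 0 + B 1 1"
    by (simp add: numeral_2_eq_2)
  moreover have "0 \<le> Re (B s s)" if "s < 2" for s
  proof -
    have "0 \<le> Re (qform (d * n) (\<lambda>R R'. K (interleave n R s) (interleave n R' s))
        (\<lambda>R. f (interleave n R s)))"
      using diag[OF that] unfolding form_nonneg_def by blast
    then show ?thesis
      by (simp add: B_def qform_def)
  qed
  ultimately show "0 \<le> Re (qform (d * 2 * n) K f)"
    by simp
qed

section \<open>Sign symmetry\<close>

text \<open>\<open>sign_covariant d \<pi> \<sigma> c M\<close> says \<open>(P D) M (P D)\<^sup>T = c M\<close> for the permutation matrix \<open>P\<close>
  of \<open>\<pi>\<close> and \<open>D = diag \<sigma>\<close>.\<close>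

definition sign_covariant ::
    "nat \<Rightarrow> (nat \<Rightarrow> nat) \<Rightarrow> (nat \<Rightarrow> real) \<Rightarrow> complex \<Rightarrow> complex mat \<Rightarrow> bool" where
  "sign_covariant d \<pi> \<sigma> c M \<longleftrightarrow>
     (\<forall>a<d. \<forall>a'<d. M $$ (\<pi> a, \<pi> a') = c * of_real (\<sigma> a * \<sigma> a') * M $$ (a, a'))"

definition neg_symmetric :: "nat \<Rightarrow> complex mat list \<Rightarrow> bool" where
  "neg_symmetric d A \<longleftrightarrow> (\<exists>\<pi> \<sigma>. bij_betw \<pi> {..<d} {..<d} \<and> (\<forall>a. \<sigma> a = 1 \<or> \<sigma> a = -1) \<and>
     (\<forall>M\<in>set A. sign_covariant d \<pi> \<sigma> (-1) M))"

lemma form_nonneg_pencil_neg: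
  assumes sym: "neg_symmetric d A" and nonneg: "form_nonneg (d * n) (pencil_kernel A X n)"
  shows "form_nonneg (d * n) (\<lambda>R R'. of_bool (R = R') + kron_sum_entry A X n R R')"
proof (cases "n = 0")
  case False
  then have n: "0 < n"
    by simp
  obtain \<pi> \<sigma> where \<pi>: "bij_betw \<pi> {..<d} {..<d}" and \<sigma>: "\<forall>a. \<sigma> a = 1 \<or> \<sigma> a = -1"
    and anti: "\<forall>M\<in>set A. sign_covariant d \<pi> \<sigma> (-1) M"
    using sym unfolding neg_symmetric_def by blast
  txt \<open>\<open>\<tau>\<close> and \<open>\<rho>\<close> realise the congruence by \<open>(P D) \<otimes> I\<close>.\<close>
  define \<tau> where "\<tau> R = \<pi> (R div n) * n + R mod n" for R
  define \<rho> where "\<rho> R = \<sigma> (R div n)" for R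
  have \<tau>: "bij_betw \<tau> {..<d * n} {..<d * n}"
    unfolding \<tau>_def using bij_betw_block_perm[OF \<pi> n] .
  have \<tau>_div_mod: "\<tau> R div n = \<pi> (R div n)" "\<tau> R mod n = R mod n" for R
    using n by (simp_all add: \<tau>_def)
  have \<rho>_sq: "\<rho> R * \<rho> R = 1" for R
    using \<sigma> by (metis \<rho>_def mult_1_left mult_minus1 minus_minus)
  have "of_bool (\<tau> R = \<tau> R') + kron_sum_entry A X n (\<tau> R) (\<tau> R') =
      of_real (\<rho> R * \<rho> R') * pencil_kernel A X n R R'"
    if R: "R < d * n" "R' < d * n" for R R'
  proof -
    have "R div n < d" "R' div n < d"
      using R by (simp_all add: less_mult_imp_div_less)
    then have entry: "kron_sum_entry A X n (\<tau> R) (\<tau> R') =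
        - (of_real (\<rho> R * \<rho> R') * kron_sum_entry A X n R R')"
      unfolding kron_sum_entry_def \<tau>_div_mod \<rho>_def sum_distrib_left sum_negf[symmetric]
      using anti by (intro sum.cong refl) (simp add: sign_covariant_def)
    have "\<tau> R = \<tau> R' \<longleftrightarrow> R = R'"
      using \<tau> R by (auto simp: bij_betw_def inj_on_def)
    then have diag: "of_bool (\<tau> R = \<tau> R') = (of_real (\<rho> R * \<rho> R') * of_bool (R = R') :: complex)"
      by (cases "R = R'") (simp_all add: \<rho>_sq del: of_real_mult)
    show ?thesis
      unfolding entry diag by (simp add: pencil_kernel_def algebra_simps)
  qed
  then show ?thesis
    by (rule form_nonneg_congruence[OF \<tau> _ nonneg])
qed simp

lemma sign_covariant_kron:
  assumes B: "sign_covariant d \<pi> \<sigma> b B" "B \<in> carrier_mat d d"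
    and C: "sign_covariant 2 id \<tau> c C" "C \<in> carrier_mat 2 2"
    and \<pi>: "\<forall>a<d. \<pi> a < d"
  shows "sign_covariant (d * 2) (\<lambda>r. \<pi> (r div 2) * 2 + r mod 2) (\<lambda>r. \<sigma> (r div 2) * \<tau> (r mod 2))
    (b * c) (kron B C)"
  unfolding sign_covariant_def
proof (intro allI impI)
  fix r r'
  assume "r < d * 2" "r' < d * 2"
  then have bounds: "r div 2 < d" "r' div 2 < d" "r mod 2 < 2" "r' mod 2 < 2"
    by auto
  let ?a = "r div 2" and ?a' = "r' div 2" and ?s = "r mod 2" and ?s' = "r' mod 2"
  have "kron B C $$ (\<pi> ?a * 2 + ?s, \<pi> ?a' * 2 + ?s') = B $$ (\<pi> ?a, \<pi> ?a') * C $$ (?s, ?s')"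
    using \<pi> bounds by (intro index_kron_2[OF B(2) C(2)]) auto
  also have "\<dots> = (b * of_real (\<sigma> ?a * \<sigma> ?a') * B $$ (?a, ?a')) *
      (c * of_real (\<tau> ?s * \<tau> ?s') * C $$ (?s, ?s'))"
    using B(1) C(1) bounds unfolding sign_covariant_def id_apply
    by (intro arg_cong2[where f = "(*)"]) blast+
  also have "\<dots> = b * c * of_real (\<sigma> ?a * \<tau> ?s * (\<sigma> ?a' * \<tau> ?s')) *
      (B $$ (?a, ?a') * C $$ (?s, ?s'))"
    by (simp add: algebra_simps)
  also have "B $$ (?a, ?a') * C $$ (?s, ?s') = kron B C $$ (r, r')"
    using index_kron_2[OF B(2) C(2) bounds] by simp
  finally show "kron B C $$ (\<pi> ?a * 2 + ?s, \<pi> ?a' * 2 + ?s') =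
    b * c * of_real (\<sigma> ?a * \<tau> ?s * (\<sigma> ?a' * \<tau> ?s')) * kron B C $$ (r, r')" .
qed

lemma sign_covariant_sigma:
  "sign_covariant 2 id (\<lambda>s. (-1) ^ s) 1 sigma_z"
  "sign_covariant 2 id (\<lambda>s. (-1) ^ s) (-1) sigma_x"
  by (auto simp: sign_covariant_def less_Suc_eq numeral_2_eq_2 index_sigma_z index_sigma_x)

lemma sign_covariant_one:
  assumes "bij_betw \<pi> {..<d} {..<d}" "\<forall>a. \<sigma> a = 1 \<or> \<sigma> a = -1"
  shows "sign_covariant d \<pi> \<sigma> 1 (1\<^sub>m d)"
  unfolding sign_covariant_def
proof (intro allI impI)
  fix a a'
  assume a: "a < d" "a' < d"
  then have "\<pi> a < d" "\<pi> a' < d" "\<pi> a = \<pi> a' \<longleftrightarrow> a = a'"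
    using assms(1) by (auto simp: bij_betw_def inj_on_def)
  moreover have "complex_of_real (\<sigma> a) * of_real (\<sigma> a) = 1"
    using assms(2) by (metis mult_1_left mult_minus1 minus_minus of_real_1 of_real_mult)
  ultimately show "(1\<^sub>m d :: complex mat) $$ (\<pi> a, \<pi> a') =
      1 * of_real (\<sigma> a * \<sigma> a') * 1\<^sub>m d $$ (a, a')"
    using a by auto
qed

lemma neg_symmetric_F_next:
  assumes sym: "neg_symmetric d A" and carrier: "\<forall>M\<in>set A. M \<in> carrier_mat d d"
  shows "neg_symmetric (d * 2) (F_next d A)"
proof -
  obtain \<pi> \<sigma> where \<pi>: "bij_betw \<pi> {..<d} {..<d}" and \<sigma>: "\<forall>a. \<sigma> a = 1 \<or> \<sigma> a = -1"
    and anti: "\<forall>M\<in>set A. sign_covariant d \<pi> \<sigma> (-1) M"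
    using sym unfolding neg_symmetric_def by blast
  let ?\<pi> = "\<lambda>r. \<pi> (r div 2) * 2 + r mod 2" and ?\<sigma> = "\<lambda>r. \<sigma> (r div 2) * (-1) ^ (r mod 2)"
  have bij: "bij_betw ?\<pi> {..<d * 2} {..<d * 2}"
    by (rule bij_betw_block_perm[OF \<pi>]) simp
  have signs: "\<forall>r. ?\<sigma> r = 1 \<or> ?\<sigma> r = -1"
  proof
    fix r :: nat
    have "r mod 2 = 0 \<or> r mod 2 = 1"
      by auto
    then show "?\<sigma> r = 1 \<or> ?\<sigma> r = -1"
      using \<sigma>[rule_format, of "r div 2"] by auto
  qed
  have \<pi>_less: "\<forall>a<d. \<pi> a < d"
    using \<pi> by (auto simp: bij_betw_def)
  have "sign_covariant (d * 2) ?\<pi> ?\<sigma> (-1) M" if "M \<in> set (F_next d A)" for M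
  proof -
    from that consider (z) B where "B \<in> set A" "M = kron B sigma_z"
      | (x) "M = kron (1\<^sub>m d) sigma_x"
      by (auto simp: F_next_def)
    then show ?thesis
    proof cases
      case z
      then show ?thesis
        using sign_covariant_kron[OF _ _ sign_covariant_sigma(1) sigma_carrier(1) \<pi>_less]
          anti carrier
        by simp
    next
      case x
      then show ?thesis
        using sign_covariant_kron[OF sign_covariant_one[OF \<pi> \<sigma>] one_carrier_mat
            sign_covariant_sigma(2) sigma_carrier(2) \<pi>_less]
        by simp
    qed
  qed
  then show ?thesis
    unfolding neg_symmetric_def using bij signs by (intro exI[of _ ?\<pi>] exI[of _ ?\<sigma>]) blast
qed

lemma neg_symmetric_F: "2 \<le> m \<Longrightarrow> neg_symmetric (2 ^ (m - 1)) (F m)"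
proof (induction m rule: dec_induct)
  case base
  have "bij_betw (\<lambda>a. 1 - a) {..<2::nat} {..<2}"
    by (rule bij_betw_byWitness[where f' = "\<lambda>a. 1 - a"]) auto
  moreover have "\<forall>M\<in>set (F 2). sign_covariant 2 (\<lambda>a. 1 - a) (\<lambda>a. (-1) ^ a) (-1) M"
    by (auto simp: sign_covariant_def numeral_2_eq_2 less_Suc_eq sigma_z_def sigma_x_def
        mat_of_rows_list_def)
  moreover have "\<forall>a::nat. (-1 :: real) ^ a = 1 \<or> (-1 :: real) ^ a = -1"
    by (metis neg_one_even_power neg_one_odd_power)
  ultimately show ?case
    unfolding neg_symmetric_def by auto
next
  case (step m)
  have "2 ^ (Suc m - 1) = 2 ^ (m - 1) * (2::nat)"
    using step.hyps(1) by (cases m) auto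
  then show ?case
    using neg_symmetric_F_next[OF step.IH] SM_tuple_F[OF step.hyps(1)] F_Suc[OF step.hyps(1)]
    by (simp add: SM_tuple_def)
qed

section \<open>One step of the recursion\<close>

lemma kron_sum_entry_F_next:
  assumes carrier: "\<forall>M\<in>set A. M \<in> carrier_mat d d" and len: "length X = length A"
    and n: "0 < n" and bounds: "R < d * n" "R' < d * n" "s < 2" "t < 2"
  shows "kron_sum_entry (F_next d A) (X @ [Y]) n (interleave n R s) (interleave n R' t) =
    sigma_z $$ (s, t) * kron_sum_entry A X n R R' +
    of_bool (R div n = R' div n) * sigma_x $$ (s, t) * Y $$ (R mod n, R' mod n)"
proof -
  have div_less: "R div n < d" "R' div n < d"
    using bounds by (simp_all add: less_mult_imp_div_less)
  have "F_next d A ! i $$ (R div n * 2 + s, R' div n * 2 + t) *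
        (X @ [Y]) ! i $$ (R mod n, R' mod n) =
      sigma_z $$ (s, t) * (A ! i $$ (R div n, R' div n) * X ! i $$ (R mod n, R' mod n))"
    if "i < length A" for i
  proof -
    have "F_next d A ! i = kron (A ! i) sigma_z" "(X @ [Y]) ! i = X ! i"
      "A ! i \<in> carrier_mat d d"
      using that len carrier by (simp_all add: F_next_def nth_append)
    then show ?thesis
      using index_kron_2[OF _ sigma_carrier(1) div_less bounds(3,4)] by simp
  qed
  moreover have "F_next d A ! length A = kron (1\<^sub>m d) sigma_x" "(X @ [Y]) ! length A = Y"
    using len by (simp_all add: F_next_def nth_append)
  ultimately show ?thesis
    using index_kron_2[OF one_carrier_mat sigma_carrier(2) div_less bounds(3,4)] div_less
    by (simp add: kron_sum_entry_def F_next_def interleave_div_mod[OF n] sum_distrib_left)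
qed

lemma form_nonneg_pencil_F_next_restrict:
  assumes carrier: "\<forall>M\<in>set A. M \<in> carrier_mat d d" and len: "length X = length A"
    and nonneg: "form_nonneg (d * 2 * n) (pencil_kernel (F_next d A) (X @ [Y]) n)"
  shows "form_nonneg (d * n) (pencil_kernel A X n)"
proof (cases "n = 0")
  case False
  then have n: "0 < n"
    by simp
  have "pencil_kernel (F_next d A) (X @ [Y]) n (interleave n R 0) (interleave n R' 0) =
      pencil_kernel A X n R R'" if "R < d * n" "R' < d * n" for R R'
    using kron_sum_entry_F_next[OF carrier len n that] interleave_eq_iff[OF n]
    by (simp add: pencil_kernel_def index_sigma_z index_sigma_x)
  then have "form_nonneg (d * n) (\<lambda>R R'. pencil_kernel (F_next d A) (X @ [Y]) n
      (interleave n R 0) (interleave n R' 0)) \<longleftrightarrow> form_nonneg (d * n) (pencil_kernel A X n)"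
    by (rule form_nonneg_cong)
  then show ?thesis
    using form_nonneg_interleave_compress[OF n nonneg] by blast
qed simp

lemma form_nonneg_pencil_F_next_zero:
  assumes sym: "neg_symmetric d A" and carrier: "\<forall>M\<in>set A. M \<in> carrier_mat d d"
    and len: "length X = length A" and nonneg: "form_nonneg (d * n) (pencil_kernel A X n)"
  shows "form_nonneg (d * 2 * n) (pencil_kernel (F_next d A) (X @ [0\<^sub>m n n]) n)"
proof (cases "n = 0")
  case False
  then have n: "0 < n"
    by simp
  let ?K = "pencil_kernel (F_next d A) (X @ [0\<^sub>m n n]) n"
  have block: "?K (interleave n R s) (interleave n R' t) =
      of_bool (s = t) * (of_bool (R = R') - sigma_z $$ (s, s) * kron_sum_entry A X n R R')"
    if "R < d * n" "R' < d * n" "s < 2" "t < 2" for R R' s t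
    using kron_sum_entry_F_next[OF carrier len n that] interleave_eq_iff[OF n that(3,4)] n that
    by (auto simp: pencil_kernel_def index_sigma_z)
  have upper: "form_nonneg (d * n) (\<lambda>R R'. ?K (interleave n R 0) (interleave n R' 0))
      \<longleftrightarrow> form_nonneg (d * n) (pencil_kernel A X n)"
    by (rule form_nonneg_cong) (simp add: block pencil_kernel_def[of A] index_sigma_z)
  have lower: "form_nonneg (d * n) (\<lambda>R R'. ?K (interleave n R 1) (interleave n R' 1))
      \<longleftrightarrow> form_nonneg (d * n) (\<lambda>R R'. of_bool (R = R') + kron_sum_entry A X n R R')"
    by (rule form_nonneg_cong) (simp add: block index_sigma_z)
  have diag: "form_nonneg (d * n) (\<lambda>R R'. ?K (interleave n R s) (interleave n R' s))"
    if "s < 2" for s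
  proof -
    from that consider "s = 0" | "s = 1"
      by linarith
    then show ?thesis
      using nonneg form_nonneg_pencil_neg[OF sym nonneg] upper lower by cases simp_all
  qed
  show ?thesis
    by (rule form_nonneg_interleave_block_diag[OF n _ diag]) (simp add: block)
qed simp

lemma psd_pencil_F_Suc_iff:
  assumes "2 \<le> m" "SM_tuple n m X" "Y \<in> carrier_mat n n" "self_adjoint Y"
  shows "psd (pencil (F (Suc m)) n (X @ [Y])) \<longleftrightarrow>
    form_nonneg (2 ^ (m - 1) * 2 * n) (pencil_kernel (F_next (2 ^ (m - 1)) (F m)) (X @ [Y]) n)"
proof -
  have "SM_tuple n (Suc m) (X @ [Y])"
    using SM_tuple_append[OF assms(2), of 1 "[Y]"] assms(3,4) by (simp add: SM_tuple_def)
  moreover have "2 ^ (Suc m - 1) = 2 ^ (m - 1) * (2::nat)"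
    using assms(1) by (cases m) auto
  ultimately show ?thesis
    using psd_pencil_F_iff[of "Suc m"] assms(1) F_Suc[OF assms(1)] by simp
qed

lemma psd_pencil_F_Suc_restrict:
  assumes m: "2 \<le> m" and X: "SM_tuple n m X" and Y: "Y \<in> carrier_mat n n" "self_adjoint Y"
    and psd: "psd (pencil (F (Suc m)) n (X @ [Y]))"
  shows "psd (pencil (F m) n X)"
proof -
  have "form_nonneg (2 ^ (m - 1) * 2 * n)
      (pencil_kernel (F_next (2 ^ (m - 1)) (F m)) (X @ [Y]) n)"
    using psd psd_pencil_F_Suc_iff[OF m X Y] by simp
  then have "form_nonneg (2 ^ (m - 1) * n) (pencil_kernel (F m) X n)"
    by (rule form_nonneg_pencil_F_next_restrict[OF F_carrier_length[OF m X]])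
  then show ?thesis
    using psd_pencil_F_iff[OF m X] by simp
qed

lemma psd_pencil_F_Suc_zero:
  assumes m: "2 \<le> m" and X: "SM_tuple n m X"
  shows "psd (pencil (F (Suc m)) n (X @ [0\<^sub>m n n])) \<longleftrightarrow> psd (pencil (F m) n X)"
proof
  show "psd (pencil (F (Suc m)) n (X @ [0\<^sub>m n n])) \<Longrightarrow> psd (pencil (F m) n X)"
    using psd_pencil_F_Suc_restrict[OF m X zero_carrier_mat self_adjoint_zero] .
  assume "psd (pencil (F m) n X)"
  then have "form_nonneg (2 ^ (m - 1) * n) (pencil_kernel (F m) X n)"
    using psd_pencil_F_iff[OF m X] by simp
  then have "form_nonneg (2 ^ (m - 1) * 2 * n)
      (pencil_kernel (F_next (2 ^ (m - 1)) (F m)) (X @ [0\<^sub>m n n]) n)"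
    by (rule form_nonneg_pencil_F_next_zero[OF neg_symmetric_F[OF m] F_carrier_length[OF m X]])
  then show "psd (pencil (F (Suc m)) n (X @ [0\<^sub>m n n]))"
    using psd_pencil_F_Suc_iff[OF m X zero_carrier_mat self_adjoint_zero] by simp
qed

lemma psd_pencil_F_append_zeros:
  assumes "2 \<le> g" "SM_tuple n g X"
  shows "psd (pencil (F (g + k)) n (X @ replicate k (0\<^sub>m n n))) \<longleftrightarrow> psd (pencil (F g) n X)"
proof (induction k)
  case (Suc k)
  have "X @ replicate (Suc k) (0\<^sub>m n n) = (X @ replicate k (0\<^sub>m n n)) @ [0\<^sub>m n n]"
    by (simp add: replicate_append_same[symmetric])
  then have "psd (pencil (F (g + Suc k)) n (X @ replicate (Suc k) (0\<^sub>m n n)))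
      \<longleftrightarrow> psd (pencil (F (g + k)) n (X @ replicate k (0\<^sub>m n n)))"
    using psd_pencil_F_Suc_zero[OF _ SM_tuple_append[OF assms(2) SM_tuple_replicate_zero]] assms(1)
    by simp
  with Suc.IH show ?case
    by simp
qed simp

lemma psd_pencil_F_append_restrict:
  assumes "2 \<le> g" "SM_tuple n g X"
  shows "SM_tuple n k Y \<Longrightarrow> psd (pencil (F (g + k)) n (X @ Y)) \<Longrightarrow> psd (pencil (F g) n X)"
proof (induction Y arbitrary: k rule: rev_induct)
  case Nil
  then show ?case
    by (simp add: SM_tuple_def)
next
  case (snoc y Y)
  then obtain k' where k: "k = Suc k'" "SM_tuple n k' Y" "y \<in> carrier_mat n n" "self_adjoint y"
    by (cases k) (auto simp: SM_tuple_def)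
  then have "psd (pencil (F (Suc (g + k'))) n ((X @ Y) @ [y]))"
    using snoc.prems(2) by simp
  then have "psd (pencil (F (g + k')) n (X @ Y))"
    using psd_pencil_F_Suc_restrict[of "g + k'"] SM_tuple_append[OF assms(2) k(2)] k(3,4) assms(1)
    by simp
  then show ?case
    using snoc.IH[OF k(2)] by simp
qed

lemma mem_freeSpec_F_iff_ex:
  "2 \<le> m \<Longrightarrow> X \<in> freeSpec (F m) \<longleftrightarrow> (\<exists>n. SM_tuple n m X \<and> psd (pencil (F m) n X))"
  using SM_tuple_F by (auto simp: freeSpec_def SM_tuple_def)

lemma mem_freeSpec_F_iff:
  assumes m: "2 \<le> m" and X: "SM_tuple n m X"
  shows "X \<in> freeSpec (F m) \<longleftrightarrow> psd (pencil (F m) n X)"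
proof
  assume "X \<in> freeSpec (F m)"
  then obtain n' where X': "SM_tuple n' m X" and "psd (pencil (F m) n' X)"
    using mem_freeSpec_F_iff_ex[OF m] by blast
  moreover have "n' = n"
    using SM_tuple_dim_unique[OF X' X] m by simp
  ultimately show "psd (pencil (F m) n X)"
    by simp
next
  assume "psd (pencil (F m) n X)"
  then show "X \<in> freeSpec (F m)"
    using mem_freeSpec_F_iff_ex[OF m] X by blast
qed

lemma mem_freeSpec_F_append_zeros_iff:
  assumes "2 \<le> g" "g \<le> h" "SM_tuple n g X"
  shows "X @ replicate (h - g) (0\<^sub>m n n) \<in> freeSpec (F h) \<longleftrightarrow> X \<in> freeSpec (F g)"
proof -
  obtain k where h: "h = g + k"
    using assms(2) le_iff_add by blast
  have "SM_tuple n h (X @ replicate (h - g) (0\<^sub>m n n))"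
    using SM_tuple_append[OF assms(3) SM_tuple_replicate_zero] h by simp
  then show ?thesis
    using mem_freeSpec_F_iff psd_pencil_F_append_zeros[OF assms(1,3)] assms(1,3) h by simp
qed

lemma mem_freeSpec_F_append_restrict:
  assumes "2 \<le> g" "g \<le> h" "SM_tuple n g X" "SM_tuple n (h - g) Y" "X @ Y \<in> freeSpec (F h)"
  shows "X \<in> freeSpec (F g)"
proof -
  obtain k where h: "h = g + k"
    using assms(2) le_iff_add by blast
  have "SM_tuple n h (X @ Y)"
    using SM_tuple_append[OF assms(3,4)] h by simp
  then have "psd (pencil (F (g + k)) n (X @ Y))"
    using mem_freeSpec_F_iff assms(1,5) h by simp
  then show ?thesis
    using psd_pencil_F_append_restrict[OF assms(1,3)] assms(1,3,4) mem_freeSpec_F_iff h by simp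
qed

theorem mainTheorem5:
  fixes g h :: nat
  assumes "2 \<le> g" and "g < h"
  shows "(\<forall>n X. SM_tuple n g X \<longrightarrow>
            (X \<in> freeSpec (F g) \<longleftrightarrow> X @ replicate (h - g) (0\<^sub>m n n) \<in> freeSpec (F h)))
         \<and> proj g h (freeSpec (F h)) = freeSpec (F g)"
proof -
  note zeros = mem_freeSpec_F_append_zeros_iff[OF assms(1) less_imp_le[OF assms(2)]]
  have "proj g h (freeSpec (F h)) = freeSpec (F g)"
  proof (intro equalityI subsetI)
    fix X
    assume "X \<in> proj g h (freeSpec (F h))"
    then show "X \<in> freeSpec (F g)"
      using mem_freeSpec_F_append_restrict[OF assms(1) less_imp_le[OF assms(2)]]
      by (auto simp: proj_def)
  next
    fix X
    assume X: "X \<in> freeSpec (F g)"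
    then obtain n where "SM_tuple n g X"
      using mem_freeSpec_F_iff_ex[OF assms(1)] by blast
    then show "X \<in> proj g h (freeSpec (F h))"
      using X zeros SM_tuple_replicate_zero unfolding proj_def by blast
  qed
  with zeros show ?thesis
    by blast
qed

end
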